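(* In the standing setting with the noisy iteration (I)–(III), let $\kappa>1$, and let $a$, $y^{(k+1)}$ and $r^{(k+1)}$ be defined for this $\kappa$ and the given $\rho$. Then, almost surely, for every $k\ge0$, $$\|U^{(k+1)}-U^*\|_G^2\le a\|U^{(k)}-U^*\|_G^2+y^{(k+1)}\|U^{(k)}-U^*\|_G+r^{(k+1)}.$$
   Context: Standing setting. $\mathcal{G}=(\mathcal{V},\mathcal{E})$ is a connected undirected graph without self-loops on $\mathcal{V}=\{1,\dots,N\}$. Set $\mathcal{N}_i=\{j:(i,j)\in\mathcal{E}\}$ and $N_i=|\mathcal{N}_i|$. $\mathcal{A}$ is the set of directed arcs obtained by taking both orientations $(i,j)$ and $(j,i)$ of every edge of $\mathcal{E}$, so $|\mathcal{A}|=2|\mathcal{E}|$. Fix an enumeration $q=1,\dots,|\mathcal{A}|$ of $\mathcal{A}$. Each $f_i:\mathbb{R}^d\to\mathbb{R}$ is differentiable and $m_{f_i}$-strongly convex, i.e. $\langle\nabla f_i(u)-\nabla f_i(v),u-v\rangle\ge m_{f_i}\|u-v\|^2$ with $m_{f_i}>0$. Its gradient is $M_{f_i}$-Lipschitz. The function $\sum_i f_i$ has a (unique) minimizer $x^*$. For $X=(x_1,\dots,x_N)\in\mathbb{R}^{Nd}$ let $f(X)=\sum_i f_i(x_i)$, $m_f=\min_i m_{f_i}$ and $M_f=\max_i M_{f_i}$. $M_+,M_-\in\mathbb{R}^{Nd\times|\mathcal{A}|d}$ are block matrices with $d\times d$ blocks. If the $q$-th arc is $(i,j)$, then: - the $(i,q)$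 and $(j,q)$ blocks of $M_+$ are $I_d$; - the $(i,q)$ block of $M_-$ is $I_d$ and its $(j,q)$ block is $-I_d$; - all other blocks are zero. $D=\mathrm{diag}(N_1,\dots,N_N)\otimes I_d$. $\sigma_{\max}(M)$ and $\sigma_{\min}(M)$ denote the largest and the smallest nonzero singular value of a matrix $M$. $X^*=(x^*,\dots,x^* )$, $Z^*=\tfrac12M_+^TX^*$, and $\beta^*$ is the unique vector in the column space of $M_-^T$ with $\nabla f(X^* )+M_-\beta^*=0$. Set $U^*=(Z^*,\beta^* )$. For $\rho>0$, $G=\mathrm{diag}(\rho I_{|\mathcal{A}|d},\rho^{-1}I_{|\mathcal{A}|d})$ and $\|v\|_G^2=v^TGv$. Noisy iteration. Fix $\rho>0$. Let $w^{(1)},w^{(2)},\dots$ be i.i.d. $\mathcal{N}(0,I_{Nd})$, independent of a random initialization $(X^{(0)},\beta^{(0)})$ in which $\beta^{(0)}$ lies in the column space of $M_-^T$. Set $Z^{(0)}=\tfrac12M_+^TX^{(0)}$. For $k\ge0$ the random vectors $X^{(k+1)}\in\mathbb{R}^{Nd}$ and $Z^{(k+1)},\beta^{(k+1)}\in\mathbb{R}^{|\mathcal{A}|d}$ satisfy (I) $\nabla f(X^{(k+1)})+M_-\beta^{(k+1)}+\sqrt2Dw^{(k+1)}=\rho M_+(Z^{(k)}-Z^{(k+1)})$, (II) $\beta^{(k+1)}-\beta^{(k)}-\tfrac\rho2M_-^TX^{(k+1)}=0$, (III) $\tfrac12M_+^TX^{(k+1)}-Z^{(k+1)}=0$. Set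 $U^{(k)}=(Z^{(k)},\beta^{(k)})$. Constants (for given $\kappa>1$ and $\rho>0$): $$\delta=\min\Big\{\frac{(\kappa-1)\sigma_{\min}^2(M_-)}{\kappa\sigma_{\max}^2(M_+)},\ \frac{m_f}{\frac\rho4\sigma_{\max}^2(M_+)+\frac{\kappa M_f^2}{\rho\sigma_{\min}^2(M_-)}}\Big\},$$ $$a=\frac{2m_f+1}{2m_f(1+\delta)},\quad b=\frac1{2(1+\delta)},\quad c=\frac{2\sqrt2\,\delta}{(1+\delta)\sigma_{\min}^2(M_-)},\quad \tilde d=\frac{\rho\sigma_{\max}^2(M_-)}2,\quad e=\frac{2\delta}{(1+\delta)\rho\sigma_{\min}^2(M_-)}.$$ With $\bar w^{(k+1)}=\|\tfrac1{\sqrt2m_f}Dw^{(k+1)}\|+\|\sqrt2Dw^{(k+1)}\|$, define $$y^{(k+1)}=\frac{2b}{\sqrt{m_f}}\bar w^{(k+1)}+c\,\sigma_{\max}(M_-)\sqrt\rho\|Dw^{(k+1)}\|+\frac{c\tilde d}{\sqrt{m_f}}\|Dw^{(k+1)}\|,$$ $$r^{(k+1)}=\frac{\sqrt2b}{m_f}\bar w^{(k+1)}\|Dw^{(k+1)}\|+b(\bar w^{(k+1)})^2+\frac b{2m_f^2}\|Dw^{(k+1)}\|^2+\frac{\sqrt2c\tilde d}{m_f}\|Dw^{(k+1)}\|^2-e\|Dw^{(k+1)}\|^2.$$ (Here $\tilde d$ is the paper's constant "$d$", renamed to avoid a clash with the dimension $d$.) *)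

theory Defs
  imports "HOL-Probability.Probability"
begin

text \<open>Graph given by its undirected edge set E (edges are 2-element vertex sets, so no
self-loops); vertex set = UNIV of the finite type 'n. Arcs = both orientations.\<close>

definition arcs :: "'n set set \<Rightarrow> ('n \<times> 'n) set" where
  "arcs E = {(i, j). {i, j} \<in> E}"

definition nbrs :: "'n set set \<Rightarrow> 'n \<Rightarrow> 'n set" where
  "nbrs E i = {j. {i, j} \<in> E}"

definition deg :: "'n set set \<Rightarrow> 'n \<Rightarrow> nat" where
  "deg E i = card (nbrs E i)"

definition connected_graph :: "'n set set \<Rightarrow> bool" where
  "connected_graph E \<longleftrightarrow> (\<forall>i j. (i, j) \<in> (arcs E)\<^sup>*)"

definition Mplus :: "('a::finite \<Rightarrow> 'n \<times> 'n) \<Rightarrow> real^'d^'a \<Rightarrow> real^'d^'n" where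
  "Mplus ar Z = (\<chi> i. \<Sum>q\<in>UNIV. (if fst (ar q) = i \<or> snd (ar q) = i then Z $ q else 0))"

definition Mminus :: "('a::finite \<Rightarrow> 'n \<times> 'n) \<Rightarrow> real^'d^'a \<Rightarrow> real^'d^'n" where
  "Mminus ar B = (\<chi> i. \<Sum>q\<in>UNIV. (if fst (ar q) = i then B $ q
                                   else if snd (ar q) = i then - (B $ q) else 0))"

text \<open>Transposes (written out entrywise; no self-loops so fst(ar q) differs from snd(ar q)).\<close>

definition MplusT :: "('a::finite \<Rightarrow> 'n \<times> 'n) \<Rightarrow> real^'d^'n \<Rightarrow> real^'d^'a" where
  "MplusT ar X = (\<chi> q. X $ fst (ar q) + X $ snd (ar q))"

definition MminusT :: "('a::finite \<Rightarrow> 'n \<times> 'n) \<Rightarrow> real^'d^'n \<Rightarrow> real^'d^'a" where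
  "MminusT ar X = (\<chi> q. X $ fst (ar q) - X $ snd (ar q))"

definition Dmat :: "'n set set \<Rightarrow> real^'d^'n \<Rightarrow> real^'d^'n" where
  "Dmat E w = (\<chi> i. real (deg E i) *\<^sub>R w $ i)"

definition sing_vals :: "('a::euclidean_space \<Rightarrow> 'b::euclidean_space) \<Rightarrow> real set" where
  "sing_vals L = {\<sigma>. \<sigma> > 0 \<and> (\<exists>v. v \<noteq> 0 \<and> adjoint L (L v) = \<sigma>\<^sup>2 *\<^sub>R v)}"

definition sigma_max :: "('a::euclidean_space \<Rightarrow> 'b::euclidean_space) \<Rightarrow> real" where
  "sigma_max L = Max (sing_vals L)"

definition sigma_min :: "('a::euclidean_space \<Rightarrow> 'b::euclidean_space) \<Rightarrow> real" where
  "sigma_min L = Min (sing_vals L)"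

definition Gnorm :: "real \<Rightarrow> 'z::real_normed_vector \<Rightarrow> 'b::real_normed_vector \<Rightarrow> real" where
  "Gnorm \<rho> Z B = sqrt (\<rho> * (norm Z)\<^sup>2 + (norm B)\<^sup>2 / \<rho>)"

text \<open>Constants. Arguments: kappa, rho, m_f, M_f, smaxP = sigma_max(M+),
  smaxM = sigma_max(M-), sminM = sigma_min(M-).\<close>

definition cdelta :: "real \<Rightarrow> real \<Rightarrow> real \<Rightarrow> real \<Rightarrow> real \<Rightarrow> real \<Rightarrow> real" where
  "cdelta \<kappa> \<rho> mf Mf smaxP sminM =
     min ((\<kappa> - 1) * sminM\<^sup>2 / (\<kappa> * smaxP\<^sup>2))
         (mf / (\<rho> / 4 * smaxP\<^sup>2 + \<kappa> * Mf\<^sup>2 / (\<rho> * sminM\<^sup>2)))"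

definition ca :: "real \<Rightarrow> real \<Rightarrow> real" where
  "ca \<delta> mf = (2 * mf + 1) / (2 * mf * (1 + \<delta>))"

definition cb :: "real \<Rightarrow> real" where
  "cb \<delta> = 1 / (2 * (1 + \<delta>))"

definition cc :: "real \<Rightarrow> real \<Rightarrow> real" where
  "cc \<delta> sminM = 2 * sqrt 2 * \<delta> / ((1 + \<delta>) * sminM\<^sup>2)"

definition cdt :: "real \<Rightarrow> real \<Rightarrow> real" where
  "cdt \<rho> smaxM = \<rho> * smaxM\<^sup>2 / 2"

definition ce :: "real \<Rightarrow> real \<Rightarrow> real \<Rightarrow> real" where
  "ce \<delta> \<rho> sminM = 2 * \<delta> / ((1 + \<delta>) * \<rho> * sminM\<^sup>2)"

definition wbar :: "real \<Rightarrow> 'v::real_normed_vector \<Rightarrow> real" where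
  "wbar mf Dw = norm ((1 / (sqrt 2 * mf)) *\<^sub>R Dw) + norm (sqrt 2 *\<^sub>R Dw)"

text \<open>y and r, as functions of Dw = D w^(k+1).\<close>

definition ynoise :: "real \<Rightarrow> real \<Rightarrow> real \<Rightarrow> real \<Rightarrow> real \<Rightarrow> real \<Rightarrow> real \<Rightarrow> 'v::real_normed_vector \<Rightarrow> real" where
  "ynoise \<kappa> \<rho> mf Mf smaxP smaxM sminM Dw =
     (let \<delta> = cdelta \<kappa> \<rho> mf Mf smaxP sminM; b = cb \<delta>; c = cc \<delta> sminM; dt = cdt \<rho> smaxM
      in 2 * b / sqrt mf * wbar mf Dw + c * smaxM * sqrt \<rho> * norm Dw + c * dt / sqrt mf * norm Dw)"

definition rnoise :: "real \<Rightarrow> real \<Rightarrow> real \<Rightarrow> real \<Rightarrow> real \<Rightarrow> real \<Rightarrow> real \<Rightarrow> 'v::real_normed_vector \<Rightarrow> real" where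
  "rnoise \<kappa> \<rho> mf Mf smaxP smaxM sminM Dw =
     (let \<delta> = cdelta \<kappa> \<rho> mf Mf smaxP sminM; b = cb \<delta>; c = cc \<delta> sminM; dt = cdt \<rho> smaxM;
          e = ce \<delta> \<rho> sminM
      in sqrt 2 * b / mf * wbar mf Dw * norm Dw + b * (wbar mf Dw)\<^sup>2
         + b / (2 * mf\<^sup>2) * (norm Dw)\<^sup>2 + sqrt 2 * c * dt / mf * (norm Dw)\<^sup>2
         - e * (norm Dw)\<^sup>2)"

definition std_gauss_density :: "real^'d^'n \<Rightarrow> ennreal" where
  "std_gauss_density x = ennreal (\<Prod>i\<in>UNIV. \<Prod>s\<in>UNIV. std_normal_density (x $ i $ s))"

end

theory Submission
  imports Defs
begin

text \<open>A noise-free step of the iteration contracts the \<open>G\<close>-distance to \<open>U\<^sup>*\<close> by the factor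
  \<open>1/\<surd>(1 + \<delta>)\<close>: pairing the step equations with the optimality conditions gives an energy
  identity, and the loss of \<open>\<delta>\<close> times the new error is paid for by strong monotonicity of \<open>\<nabla>f\<close>
  together with \<open>\<sigma>\<^sub>m\<^sub>i\<^sub>n(M\<^sub>-) \<parallel>\<beta> - \<beta>\<^sup>*\<parallel> \<le> \<parallel>M\<^sub>- (\<beta> - \<beta>\<^sup>*)\<parallel>\<close>, valid because every \<open>\<beta>\<^sup>(\<^sup>k\<^sup>)\<close> stays
  in the range of \<open>M\<^sub>-\<^sup>T\<close>. The noisy step started from the same \<open>U\<^sup>(\<^sup>k\<^sup>)\<close> is, again by strong
  monotonicity, within \<open>\<parallel>D w\<^sup>(\<^sup>k\<^sup>+\<^sup>1\<^sup>)\<parallel> / (2 \<surd>m\<^sub>f)\<close> of the noise-free one in \<open>G\<close>-norm. Squaring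
  the resulting triangle inequality and enlarging the coefficients gives \<open>a\<close>, \<open>y\<close> and \<open>r\<close>.
  The bound holds at every sample point.\<close>

section \<open>Singular values\<close>

lemma finite_sing_vals:
  fixes L :: "'a::euclidean_space \<Rightarrow> 'b::euclidean_space"
  assumes lin: "linear L"
  shows "finite (sing_vals L)"
proof -
  have "\<forall>\<sigma>\<in>sing_vals L. \<exists>v. v \<noteq> 0 \<and> adjoint L (L v) = \<sigma>\<^sup>2 *\<^sub>R v"
    by (auto simp: sing_vals_def)
  then obtain V where V: "\<And>\<sigma>. \<sigma> \<in> sing_vals L \<Longrightarrow> V \<sigma> \<noteq> 0 \<and> adjoint L (L (V \<sigma>)) = \<sigma>\<^sup>2 *\<^sub>R V \<sigma>"
    by metis
  have orth: "V \<sigma> \<bullet> V \<tau> = 0" if s: "\<sigma> \<in> sing_vals L" "\<tau> \<in> sing_vals L" "\<sigma> \<noteq> \<tau>" for \<sigma> \<tau>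
  proof -
    have "\<sigma>\<^sup>2 * (V \<sigma> \<bullet> V \<tau>) = \<tau>\<^sup>2 * (V \<sigma> \<bullet> V \<tau>)"
      using V[OF s(1)] V[OF s(2)] adjoint_clauses(2)[OF lin, of "L (V \<sigma>)" "V \<tau>"]
        adjoint_clauses(1)[OF lin, of "V \<sigma>" "L (V \<tau>)"] by simp
    moreover have "\<sigma>\<^sup>2 \<noteq> \<tau>\<^sup>2"
      using s by (auto simp: sing_vals_def power2_eq_iff)
    ultimately show ?thesis by simp
  qed
  have inj: "inj_on V (sing_vals L)"
  proof (rule inj_onI, rule ccontr)
    fix \<sigma> \<tau> assume "\<sigma> \<in> sing_vals L" "\<tau> \<in> sing_vals L" "V \<sigma> = V \<tau>" "\<sigma> \<noteq> \<tau>"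
    then show False using orth V by (metis inner_eq_zero_iff)
  qed
  have "pairwise orthogonal (V ` sing_vals L)"
    unfolding pairwise_def orthogonal_def using orth by auto
  moreover have "0 \<notin> V ` sing_vals L" using V by force
  ultimately have "independent (V ` sing_vals L)"
    by (rule pairwise_orthogonal_independent)
  then have "finite (V ` sing_vals L)" using independent_bound by blast
  then show ?thesis using inj finite_image_iff by blast
qed

lemma quadratic_nonneg_imp_linear_coeff_zero:
  fixes c K :: real
  assumes "\<And>t. 0 \<le> 2 * t * c + t\<^sup>2 * K"
  shows "c = 0"
proof (rule ccontr)
  assume "c \<noteq> 0"
  define A where "A = \<bar>K\<bar> + 1"
  have A: "A > 0" "\<bar>K\<bar> < A" by (simp_all add: A_def)
  have "0 \<le> 2 * (- c / A) * c + (- c / A)\<^sup>2 * K" by (rule assms)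
  also have "\<dots> \<le> 2 * (- c / A) * c + (- c / A)\<^sup>2 * \<bar>K\<bar>"
    by (simp add: mult_left_mono)
  also have "\<dots> = (c\<^sup>2 / A) * (\<bar>K\<bar> / A - 2)"
    using A by (simp add: power2_eq_square field_simps)
  also have "\<dots> < 0"
    using A \<open>c \<noteq> 0\<close> by (intro mult_pos_neg) (simp_all add: divide_less_eq)
  finally show False by simp
qed

lemma power2_norm_add_scaleR:
  fixes x y :: "'a::real_inner"
  shows "(norm (x + t *\<^sub>R y))\<^sup>2 = (norm x)\<^sup>2 + 2 * t * (x \<bullet> y) + t\<^sup>2 * (norm y)\<^sup>2"
  unfolding power2_norm_eq_inner
  by (simp add: inner_add_left inner_add_right inner_commute power2_eq_square algebra_simps)

text \<open>The form is nonnegative on \<open>S\<close> and vanishes at \<open>v\<close>, so its first variation at \<open>v\<close>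
  vanishes in every direction of \<open>S\<close>; invariance lets us take the direction
  \<open>L\<^sup>* L v + (a / b) v\<close> itself.\<close>
lemma adjoint_eigenvector_of_extremal:
  fixes L :: "'a::euclidean_space \<Rightarrow> 'b::euclidean_space"
  assumes lin: "linear L" and S: "subspace S" and inv: "\<And>x. x \<in> S \<Longrightarrow> adjoint L (L x) \<in> S"
    and v: "v \<in> S" and nonneg: "\<And>x. x \<in> S \<Longrightarrow> 0 \<le> a * (norm x)\<^sup>2 + b * (norm (L x))\<^sup>2"
    and zero: "a * (norm v)\<^sup>2 + b * (norm (L v))\<^sup>2 = 0" and b: "b \<noteq> 0"
  shows "adjoint L (L v) = (- a / b) *\<^sub>R v"
proof -
  define u where "u = adjoint L (L v) + (a / b) *\<^sub>R v"
  have uS: "u \<in> S" using S inv v by (simp add: u_def subspace_add subspace_scale)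
  define c where "c = a * (v \<bullet> u) + b * (L v \<bullet> L u)"
  have "0 \<le> 2 * t * c + t\<^sup>2 * (a * (norm u)\<^sup>2 + b * (norm (L u))\<^sup>2)" for t
  proof -
    have "v + t *\<^sub>R u \<in> S" using S v uS by (simp add: subspace_add subspace_scale)
    from nonneg[OF this]
    have "0 \<le> a * (norm (v + t *\<^sub>R u))\<^sup>2 + b * (norm (L v + t *\<^sub>R L u))\<^sup>2"
      by (simp add: linear_add[OF lin] linear_scale[OF lin])
    then have "0 \<le> (a * (norm v)\<^sup>2 + b * (norm (L v))\<^sup>2) + 2 * t * c
        + t\<^sup>2 * (a * (norm u)\<^sup>2 + b * (norm (L u))\<^sup>2)"
      unfolding power2_norm_add_scaleR c_def by (simp add: algebra_simps)
    then show ?thesis using zero by simp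
  qed
  then have "c = 0" by (rule quadratic_nonneg_imp_linear_coeff_zero)
  moreover have "c = b * ((adjoint L (L v) + (a / b) *\<^sub>R v) \<bullet> u)"
    using b by (simp add: c_def inner_add_left adjoint_clauses(2)[OF lin] algebra_simps)
  then have "c = b * (u \<bullet> u)" by (simp add: u_def)
  ultimately have "u = 0" using b by simp
  then show ?thesis by (simp add: u_def eq_neg_iff_add_eq_0)
qed

lemma Rayleigh_extrema:
  fixes L :: "'a::euclidean_space \<Rightarrow> 'b::euclidean_space"
  assumes lin: "linear L" and S: "subspace S" and x0: "x0 \<in> S" "x0 \<noteq> 0"
  shows "\<exists>v\<in>S. norm v = 1 \<and> (\<forall>x\<in>S. (norm (L x))\<^sup>2 \<le> (norm (L v))\<^sup>2 * (norm x)\<^sup>2)"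
    and "\<exists>v\<in>S. norm v = 1 \<and> (\<forall>x\<in>S. (norm (L v))\<^sup>2 * (norm x)\<^sup>2 \<le> (norm (L x))\<^sup>2)"
proof -
  let ?K = "sphere 0 1 \<inter> S"
  have cont: "continuous_on ?K (\<lambda>x. (norm (L x))\<^sup>2)"
    using lin by (intro continuous_intros linear_continuous_on) (simp add: linear_conv_bounded_linear)
  have K: "compact ?K" using S by (simp add: closed_subspace compact_Int_closed)
  have unit: "x /\<^sub>R norm x \<in> ?K" if "x \<in> S" "x \<noteq> 0" for x
    using that S by (simp add: subspace_scale)
  then have ne: "?K \<noteq> {}" using x0 by blast
  have hom: "(norm (L x))\<^sup>2 = (norm (L (x /\<^sub>R norm x)))\<^sup>2 * (norm x)\<^sup>2" for x
    using lin by (cases "x = 0") (simp_all add: linear_scale linear_0 power_mult_distrib field_simps)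
  obtain v where "v \<in> ?K" and v: "\<forall>y\<in>?K. (norm (L y))\<^sup>2 \<le> (norm (L v))\<^sup>2"
    using continuous_attains_sup[OF K ne cont] by blast
  moreover have "(norm (L x))\<^sup>2 \<le> (norm (L v))\<^sup>2 * (norm x)\<^sup>2" if "x \<in> S" for x
    using hom[of x] v unit[OF that] by (cases "x = 0") (simp_all add: mult_right_mono)
  ultimately show "\<exists>v\<in>S. norm v = 1 \<and> (\<forall>x\<in>S. (norm (L x))\<^sup>2 \<le> (norm (L v))\<^sup>2 * (norm x)\<^sup>2)"
    by auto
  obtain u where "u \<in> ?K" and u: "\<forall>y\<in>?K. (norm (L u))\<^sup>2 \<le> (norm (L y))\<^sup>2"
    using continuous_attains_inf[OF K ne cont] by blast
  moreover have "(norm (L u))\<^sup>2 * (norm x)\<^sup>2 \<le> (norm (L x))\<^sup>2" if "x \<in> S" for x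
    using hom[of x] u unit[OF that] by (cases "x = 0") (simp_all add: mult_right_mono)
  ultimately show "\<exists>v\<in>S. norm v = 1 \<and> (\<forall>x\<in>S. (norm (L v))\<^sup>2 * (norm x)\<^sup>2 \<le> (norm (L x))\<^sup>2)"
    by auto
qed

lemma sigma_max_bound:
  fixes L :: "'a::euclidean_space \<Rightarrow> 'b::euclidean_space"
  assumes lin: "linear L" and nz: "L x0 \<noteq> 0"
  shows "0 < sigma_max L" and "norm (L v) \<le> sigma_max L * norm v"
proof -
  obtain v0 where v0: "norm v0 = 1" and le: "\<And>x. (norm (L x))\<^sup>2 \<le> (norm (L v0))\<^sup>2 * (norm x)\<^sup>2"
    using Rayleigh_extrema(1)[OF lin subspace_UNIV, of x0] nz linear_0[OF lin] by fastforce
  define lm where "lm = (norm (L v0))\<^sup>2"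
  have "0 < lm * (norm x0)\<^sup>2"
    using nz by (simp add: less_le_trans[OF _ le[of x0, folded lm_def]])
  then have lm: "0 < lm" by (simp add: zero_less_mult_iff)
  have "adjoint L (L v0) = lm *\<^sub>R v0"
    using adjoint_eigenvector_of_extremal[OF lin subspace_UNIV, of v0 lm "-1"] le v0
    by (simp add: lm_def mult.commute)
  then have "sqrt lm \<in> sing_vals L"
    using lm v0 unfolding sing_vals_def by (auto intro!: exI[of _ v0])
  then have le_max: "sqrt lm \<le> sigma_max L"
    unfolding sigma_max_def using finite_sing_vals[OF lin] by simp
  then show pos: "0 < sigma_max L" using lm by (meson less_le_trans real_sqrt_gt_zero)
  from sqrt_le_D[OF le_max] have "(norm (L v))\<^sup>2 \<le> (sigma_max L * norm v)\<^sup>2"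
    using le[of v] by (simp add: lm_def power_mult_distrib mult_right_mono order_trans)
  then show "norm (L v) \<le> sigma_max L * norm v"
    by (rule power2_le_imp_le) (use pos in simp)
qed

lemma sigma_min_bound:
  fixes L :: "'a::euclidean_space \<Rightarrow> 'b::euclidean_space"
  assumes lin: "linear L" and nz: "L x0 \<noteq> 0"
  shows "0 < sigma_min L" and "\<And>v. v \<in> range (adjoint L) \<Longrightarrow> sigma_min L * norm v \<le> norm (L v)"
proof -
  let ?S = "range (adjoint L)"
  have S: "subspace ?S" by (rule linear_subspace_image[OF adjoint_linear[OF lin] subspace_UNIV])
  have "x0 \<bullet> adjoint L (L x0) = L x0 \<bullet> L x0" by (simp add: adjoint_clauses(1)[OF lin])
  then have "adjoint L (L x0) \<noteq> 0" using nz by auto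
  then obtain v0 where v0: "norm v0 = 1" "v0 \<in> ?S"
    and ge: "\<And>x. x \<in> ?S \<Longrightarrow> (norm (L v0))\<^sup>2 * (norm x)\<^sup>2 \<le> (norm (L x))\<^sup>2"
    using Rayleigh_extrema(2)[OF lin S, of "adjoint L (L x0)"] by blast
  define mu where "mu = (norm (L v0))\<^sup>2"
  have mu: "0 < mu"
  proof -
    obtain y0 where "v0 = adjoint L y0" using v0 by auto
    then have "v0 \<bullet> v0 = L v0 \<bullet> y0" by (simp add: adjoint_clauses(2)[OF lin] inner_commute)
    then show ?thesis using v0 by (auto simp: mu_def)
  qed
  have "adjoint L (L v0) = mu *\<^sub>R v0"
    using adjoint_eigenvector_of_extremal[OF lin S _ v0(2), of "- mu" 1] ge v0
    by (simp add: mu_def)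
  then have "sqrt mu \<in> sing_vals L"
    using mu v0 unfolding sing_vals_def by (auto intro!: exI[of _ v0])
  then have le_sqrt: "sigma_min L \<le> sqrt mu" and "sigma_min L \<in> sing_vals L"
    unfolding sigma_min_def using finite_sing_vals[OF lin] by (auto intro: Min_in)
  then show pos: "0 < sigma_min L" by (simp add: sing_vals_def)
  have "(sigma_min L)\<^sup>2 \<le> mu"
    using mu pos power_mono[OF le_sqrt, of 2] by simp
  fix v assume "v \<in> ?S"
  have "(sigma_min L * norm v)\<^sup>2 \<le> mu * (norm v)\<^sup>2"
    using \<open>(sigma_min L)\<^sup>2 \<le> mu\<close> by (simp add: power_mult_distrib mult_right_mono)
  also have "\<dots> \<le> (norm (L v))\<^sup>2"
    using ge[OF \<open>v \<in> ?S\<close>] by (simp add: mu_def)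
  finally show "sigma_min L * norm v \<le> norm (L v)"
    by (rule power2_le_imp_le) simp
qed

section \<open>Norms, adjoint pairs and strongly monotone maps\<close>

lemma Gnorm_eq_norm_Pair:
  assumes "0 < \<rho>"
  shows "Gnorm \<rho> Z B = norm (sqrt \<rho> *\<^sub>R Z, B /\<^sub>R sqrt \<rho>)"
  using assms by (simp add: Gnorm_def norm_Pair power_mult_distrib power_divide power_inverse
      divide_inverse mult.commute)

lemma power2_Gnorm:
  assumes "0 < \<rho>"
  shows "(Gnorm \<rho> Z B)\<^sup>2 = \<rho> * (norm Z)\<^sup>2 + (norm B)\<^sup>2 / \<rho>"
  using assms by (simp add: Gnorm_def add_nonneg_nonneg)

lemma Gnorm_nonneg: "0 < \<rho> \<Longrightarrow> 0 \<le> Gnorm \<rho> Z B"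
  by (simp add: Gnorm_eq_norm_Pair)

lemma Gnorm_triangle:
  assumes "0 < \<rho>"
  shows "Gnorm \<rho> (Z1 + Z2) (B1 + B2) \<le> Gnorm \<rho> Z1 B1 + Gnorm \<rho> Z2 B2"
  using norm_triangle_ineq[of "(sqrt \<rho> *\<^sub>R Z1, B1 /\<^sub>R sqrt \<rho>)" "(sqrt \<rho> *\<^sub>R Z2, B2 /\<^sub>R sqrt \<rho>)"]
  by (simp add: Gnorm_eq_norm_Pair[OF assms] scaleR_add_right)

lemma power2_norm_diff_le_weighted:
  fixes x y :: "'a::real_normed_vector"
  assumes k: "1 < k"
  shows "(norm (x - y))\<^sup>2 \<le> k / (k - 1) * (norm x)\<^sup>2 + k * (norm y)\<^sup>2"
proof -
  have "(norm (x - y))\<^sup>2 \<le> (norm x + norm y)\<^sup>2"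
    by (simp add: power_mono norm_triangle_ineq4)
  moreover have "(k - 1) * (k / (k - 1) * (norm x)\<^sup>2 + k * (norm y)\<^sup>2 - (norm x + norm y)\<^sup>2)
      = (norm x - (k - 1) * norm y)\<^sup>2"
    using k by (simp add: field_simps power2_eq_square)
  then have "(norm x + norm y)\<^sup>2 \<le> k / (k - 1) * (norm x)\<^sup>2 + k * (norm y)\<^sup>2"
    using k by (metis diff_ge_0_iff_ge zero_le_mult_iff zero_le_power2 diff_gt_0_iff_gt not_less)
  ultimately show ?thesis by linarith
qed

lemma adjoint_pair_linear:
  fixes P :: "'z::real_inner \<Rightarrow> 'x::real_inner" and Pt :: "'x \<Rightarrow> 'z"
  assumes adj: "\<And>z x. P z \<bullet> x = z \<bullet> Pt x"
  shows "linear P" and "linear Pt"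
proof -
  show "linear P"
    by (rule linearI; rule vector_eq_rdot[THEN iffD1]) (simp_all add: adj inner_add_left)
  show "linear Pt"
    by (rule linearI; rule vector_eq_ldot[THEN iffD1]) (simp_all add: adj[symmetric] inner_add_right)
qed

lemma adjoint_pair_norm_le:
  fixes P :: "'z::real_inner \<Rightarrow> 'x::real_inner" and Pt :: "'x \<Rightarrow> 'z"
  assumes adj: "\<And>z x. P z \<bullet> x = z \<bullet> Pt x" and bound: "\<And>z. norm (P z) \<le> s * norm z"
    and s: "0 \<le> s"
  shows "norm (Pt x) \<le> s * norm x"
proof (cases "Pt x = 0")
  case True
  then show ?thesis using s by simp
next
  case False
  have "norm (Pt x) * norm (Pt x) = P (Pt x) \<bullet> x" by (simp add: adj norm_eq_sqrt_inner)
  also have "\<dots> \<le> norm (P (Pt x)) * norm x" by (rule norm_cauchy_schwarz)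
  also have "\<dots> \<le> (s * norm x) * norm (Pt x)" using mult_right_mono[OF bound[of "Pt x"] norm_ge_zero[of x]] by (simp add: mult_ac)
  finally show ?thesis using False by simp
qed

lemma adjoint_pair_ne_zero:
  fixes P :: "'z::real_inner \<Rightarrow> 'x::real_inner" and Pt :: "'x \<Rightarrow> 'z"
  assumes "\<And>z x. P z \<bullet> x = z \<bullet> Pt x" and "Pt x \<noteq> 0"
  shows "P (Pt x) \<noteq> 0"
  using assms by (metis inner_eq_zero_iff inner_zero_left)

lemma strongly_monotone_le_Lipschitz:
  fixes F :: "'a::euclidean_space \<Rightarrow> 'a"
  assumes "\<And>x y. m * (norm (x - y))\<^sup>2 \<le> (F x - F y) \<bullet> (x - y)"
    and "\<And>x y. norm (F x - F y) \<le> L * norm (x - y)"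
  shows "m \<le> L"
proof -
  obtain b :: 'a where b: "b \<in> Basis" using nonempty_Basis by blast
  have "m * (norm (b - 0))\<^sup>2 \<le> (F b - F 0) \<bullet> (b - 0)" by fact
  also have "\<dots> \<le> norm (F b - F 0) * norm (b - 0)" by (rule norm_cauchy_schwarz)
  also have "\<dots> \<le> L * norm (b - 0) * norm (b - 0)" by (rule mult_right_mono[OF assms(2)]) simp
  finally show ?thesis using b by simp
qed

text \<open>The map \<open>x \<mapsto> x - (m / L\<^sup>2) (F x - c)\<close> is a contraction, whose fixed point solves \<open>F x = c\<close>.\<close>
lemma strongly_monotone_Lipschitz_surj:
  fixes F :: "'a::{real_inner, complete_space} \<Rightarrow> 'a"
  assumes mono: "\<And>x y. m * (norm (x - y))\<^sup>2 \<le> (F x - F y) \<bullet> (x - y)"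
    and lip: "\<And>x y. norm (F x - F y) \<le> L * norm (x - y)" and m: "0 < m"
  shows "\<exists>x. F x = c"
proof -
  define L' where "L' = \<bar>L\<bar> + m"
  have L': "0 < L'" "m \<le> L'" "L \<le> L'" using m by (simp_all add: L'_def)
  have lip': "norm (F x - F y) \<le> L' * norm (x - y)" for x y
    using lip[of x y] mult_right_mono[OF L'(3) norm_ge_zero[of "x - y"]] by linarith
  define t where "t = m / L'\<^sup>2"
  define q where "q = 1 - m\<^sup>2 / L'\<^sup>2"
  have t: "0 < t" using m L' by (simp add: t_def)
  have q: "0 \<le> q" "q < 1" using m L' by (simp_all add: q_def power_mono)
  define \<Phi> where "\<Phi> x = x - t *\<^sub>R (F x - c)" for x
  have "dist (\<Phi> x) (\<Phi> y) \<le> sqrt q * dist x y" for x y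
  proof -
    define d where "d = x - y"
    define e where "e = F x - F y"
    have "(dist (\<Phi> x) (\<Phi> y))\<^sup>2 = d \<bullet> d - 2 * t * (e \<bullet> d) + t\<^sup>2 * (e \<bullet> e)"
      unfolding dist_norm power2_norm_eq_inner \<Phi>_def d_def e_def
      by (simp add: inner_diff_left inner_diff_right inner_commute power2_eq_square algebra_simps)
    also have "\<dots> \<le> d \<bullet> d - 2 * t * (m * (d \<bullet> d)) + t\<^sup>2 * (L'\<^sup>2 * (d \<bullet> d))"
    proof -
      have "m * (d \<bullet> d) \<le> e \<bullet> d" using mono[of x y] by (simp add: d_def e_def power2_norm_eq_inner)
      moreover have "(norm e)\<^sup>2 \<le> (L' * norm d)\<^sup>2" using lip'[of x y] by (simp add: d_def e_def power_mono)
      then have "e \<bullet> e \<le> L'\<^sup>2 * (d \<bullet> d)" by (simp add: power2_norm_eq_inner power_mult_distrib)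
      ultimately have "2 * t * (m * (d \<bullet> d)) \<le> 2 * t * (e \<bullet> d)" "t\<^sup>2 * (e \<bullet> e) \<le> t\<^sup>2 * (L'\<^sup>2 * (d \<bullet> d))"
        using t by (simp_all add: mult_left_mono)
      then show ?thesis by linarith
    qed
    also have "\<dots> = q * (d \<bullet> d)"
      using L' by (simp add: t_def q_def field_simps power2_eq_square)
    also have "\<dots> = (sqrt q * dist x y)\<^sup>2"
      using q by (simp add: power_mult_distrib dist_norm d_def power2_norm_eq_inner)
    finally show ?thesis by (rule power2_le_imp_le) (use q in simp)
  qed
  then obtain x where "\<Phi> x = x" using banach_fix_type[of "sqrt q" \<Phi>] q by auto
  then show ?thesis using t by (auto simp: \<Phi>_def)
qed


section \<open>The constants of the bound\<close>

lemma cdelta_bounds: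
  assumes mf: "0 < mf" and rho: "0 < \<rho>" and kappa: "1 < \<kappa>" and sm: "0 < sm"
    and sm_le: "sm \<le> sP" and mf_le: "mf \<le> Mf"
  defines "\<delta> \<equiv> cdelta \<kappa> \<rho> mf Mf sP sm"
  shows "0 \<le> \<delta>" and "\<delta> \<le> 1" and "\<delta> * \<kappa> * sP\<^sup>2 \<le> (\<kappa> - 1) * sm\<^sup>2"
    and "\<delta> * (\<rho> / 4 * sP\<^sup>2 + \<kappa> * Mf\<^sup>2 / (\<rho> * sm\<^sup>2)) \<le> mf"
    and "(1 + \<delta>) * ce \<delta> \<rho> sm \<le> 2 / mf"
proof -
  define A where "A = (\<kappa> - 1) * sm\<^sup>2 / (\<kappa> * sP\<^sup>2)"
  define den where "den = \<rho> / 4 * sP\<^sup>2 + \<kappa> * Mf\<^sup>2 / (\<rho> * sm\<^sup>2)"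
  have sP: "0 < sP" using sm sm_le by linarith
  have den: "0 < den" using rho kappa sP sm by (simp add: den_def add_pos_nonneg)
  have \<delta>: "\<delta> = min A (mf / den)" by (simp add: \<delta>_def cdelta_def A_def den_def)
  show "0 \<le> \<delta>" using kappa sm sP den mf by (simp add: \<delta> A_def)
  have "(\<kappa> - 1) * sm\<^sup>2 \<le> \<kappa> * sP\<^sup>2"
    using kappa sm sm_le by (intro mult_mono power_mono) simp_all
  then show "\<delta> \<le> 1" using kappa sP by (simp add: \<delta> A_def min.coboundedI1)
  have "\<delta> * (\<kappa> * sP\<^sup>2) \<le> A * (\<kappa> * sP\<^sup>2)"
    using kappa by (intro mult_right_mono) (simp_all add: \<delta>)
  then show "\<delta> * \<kappa> * sP\<^sup>2 \<le> (\<kappa> - 1) * sm\<^sup>2" using kappa sP by (simp add: A_def mult.assoc)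
  have "\<delta> * den \<le> mf / den * den"
    using den by (intro mult_right_mono) (simp_all add: \<delta>)
  then show d2: "\<delta> * den \<le> mf" using den by simp
  then show "(1 + \<delta>) * ce \<delta> \<rho> sm \<le> 2 / mf"
  proof -
    have "mf\<^sup>2 \<le> Mf\<^sup>2" using mf mf_le by (intro power_mono) simp_all
    also have "\<dots> \<le> \<kappa> * Mf\<^sup>2" using kappa by (simp add: mult_le_cancel_right1)
    finally have "mf\<^sup>2 \<le> \<kappa> * Mf\<^sup>2" .
    then have "\<delta> / (\<rho> * sm\<^sup>2) * mf\<^sup>2 \<le> \<delta> * (\<kappa> * Mf\<^sup>2 / (\<rho> * sm\<^sup>2))"
      using \<open>0 \<le> \<delta>\<close> rho sm by (simp add: divide_right_mono mult_left_mono)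
    also have "\<dots> \<le> \<delta> * den"
      using \<open>0 \<le> \<delta>\<close> rho by (intro mult_left_mono) (simp_all add: den_def)
    also have "\<dots> \<le> mf" by (rule d2)
    finally have "\<delta> / (\<rho> * sm\<^sup>2) * mf * mf \<le> 1 * mf"
      by (simp add: power2_eq_square mult.assoc)
    then have "\<delta> / (\<rho> * sm\<^sup>2) * mf \<le> 1"
      using mf by (rule mult_right_le_imp_le)
    then have "\<delta> / (\<rho> * sm\<^sup>2) \<le> 1 / mf"
      using mf by (simp only: pos_le_divide_eq)
    moreover have "(1 + \<delta>) * ce \<delta> \<rho> sm = 2 * (\<delta> / (\<rho> * sm\<^sup>2))"
      using \<open>0 \<le> \<delta>\<close> by (simp add: ce_def)
    ultimately show ?thesis by simp
  qed
qed

lemma noise_square_le_remainder: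
  fixes \<nu> mf \<delta> e W :: real
  assumes mf: "0 < mf" and \<delta>: "0 \<le> \<delta>" "\<delta> \<le> 1"
    and W: "W = \<nu> / (sqrt 2 * mf) + sqrt 2 * \<nu>" and e: "(1 + \<delta>) * e \<le> 2 / mf"
  shows "\<nu>\<^sup>2 / (4 * mf)
    \<le> sqrt 2 * cb \<delta> / mf * W * \<nu> + cb \<delta> * W\<^sup>2 + cb \<delta> / (2 * mf\<^sup>2) * \<nu>\<^sup>2 - e * \<nu>\<^sup>2"
proof -
  define s where "s = 1 + \<delta>"
  have s: "1 \<le> s" "s \<le> 2" using \<delta> by (simp_all add: s_def)
  have "sqrt 2 * cb \<delta> / mf * W * \<nu> + cb \<delta> * W\<^sup>2 + cb \<delta> / (2 * mf\<^sup>2) * \<nu>\<^sup>2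
      = \<nu>\<^sup>2 / s * (1 / mf\<^sup>2 + 2 / mf + 1)"
    using mf s by (simp add: W cb_def s_def[symmetric] power2_eq_square field_simps)
  moreover have "e * \<nu>\<^sup>2 \<le> \<nu>\<^sup>2 / s * (2 / mf)"
  proof -
    have "e \<le> 2 / mf / s" using e s by (simp only: s_def pos_le_divide_eq mult.commute)
    then show ?thesis using mult_right_mono[of e "2 / mf / s" "\<nu>\<^sup>2"] by (simp add: mult.commute)
  qed
  moreover have "\<nu>\<^sup>2 / (4 * mf) \<le> \<nu>\<^sup>2 / s * (1 / mf\<^sup>2 + 1)"
  proof -
    have "s / (4 * mf) \<le> 2 / mf" using mf s by (simp add: field_simps)
    also have "\<dots> \<le> 1 / mf\<^sup>2 + 1"
      using power2_diff[of 1 "1 / mf"] zero_le_power2[of "1 - 1 / mf"] by (simp add: power_one_over)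
    finally have "\<nu>\<^sup>2 / s * (s / (4 * mf)) \<le> \<nu>\<^sup>2 / s * (1 / mf\<^sup>2 + 1)"
      using s by (intro mult_left_mono) simp_all
    then show ?thesis using s by simp
  qed
  ultimately show ?thesis by (simp add: algebra_simps)
qed

text \<open>Squaring the one-step estimate; \<open>y\<close> and \<open>r\<close> only need to dominate the cross term and the
  square of the noise term.\<close>
lemma power2_le_noise_quadratic:
  fixes g u \<nu> mf \<delta> y r e W :: real
  assumes mf: "0 < mf" and \<delta>: "0 \<le> \<delta>" "\<delta> \<le> 1" and u: "0 \<le> u" and \<nu>: "0 \<le> \<nu>" and g: "0 \<le> g"
    and bound: "g \<le> u / sqrt (1 + \<delta>) + \<nu> / (2 * sqrt mf)"
    and W: "W = \<nu> / (sqrt 2 * mf) + sqrt 2 * \<nu>"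
    and y: "2 * cb \<delta> / sqrt mf * W \<le> y"
    and r: "sqrt 2 * cb \<delta> / mf * W * \<nu> + cb \<delta> * W\<^sup>2 + cb \<delta> / (2 * mf\<^sup>2) * \<nu>\<^sup>2 - e * \<nu>\<^sup>2 \<le> r"
    and e: "(1 + \<delta>) * e \<le> 2 / mf"
  shows "g\<^sup>2 \<le> ca \<delta> mf * u\<^sup>2 + y * u + r"
proof -
  define s where "s = 1 + \<delta>"
  have s: "1 \<le> s" "s \<le> 2" using \<delta> by (simp_all add: s_def)
  have cb: "cb \<delta> = 1 / (2 * s)" by (simp add: cb_def s_def)
  have "g\<^sup>2 \<le> (u / sqrt s + \<nu> / (2 * sqrt mf))\<^sup>2"
    using g bound by (intro power_mono) (simp_all add: s_def)
  also have "\<dots> = (u / sqrt s)\<^sup>2 + u * \<nu> / (sqrt s * sqrt mf) + (\<nu> / (2 * sqrt mf))\<^sup>2"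
    by (simp add: power2_eq_square algebra_simps)
  also have "\<dots> = u\<^sup>2 / s + u * \<nu> / (sqrt s * sqrt mf) + \<nu>\<^sup>2 / (4 * mf)"
    using s mf by (simp add: power_divide power_mult_distrib)
  finally have "g\<^sup>2 \<le> u\<^sup>2 / s + u * \<nu> / (sqrt s * sqrt mf) + \<nu>\<^sup>2 / (4 * mf)" .
  moreover have "u\<^sup>2 / s \<le> ca \<delta> mf * u\<^sup>2"
  proof -
    have "1 / s \<le> (2 * mf + 1) / (2 * mf * s)" using mf s by (simp add: field_simps)
    then have "1 / s * u\<^sup>2 \<le> (2 * mf + 1) / (2 * mf * s) * u\<^sup>2" by (rule mult_right_mono) simp
    then show ?thesis by (simp add: ca_def s_def)
  qed
  moreover have "u * \<nu> / (sqrt s * sqrt mf) \<le> y * u"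
  proof -
    have "1 / sqrt s = sqrt s / s" using s by (simp add: field_simps)
    also have "\<dots> \<le> sqrt 2 / s" using s by (simp add: divide_right_mono)
    finally have "u * \<nu> / sqrt mf * (1 / sqrt s) \<le> u * \<nu> / sqrt mf * (sqrt 2 / s)"
      using u \<nu> mf by (intro mult_left_mono) simp_all
    also have "\<dots> = u * (sqrt 2 * \<nu>) / (s * sqrt mf)" by (simp add: field_simps)
    also have "\<dots> \<le> u * W / (s * sqrt mf)"
      using u \<nu> mf s W by (intro divide_right_mono mult_left_mono) simp_all
    also have "\<dots> = (2 * cb \<delta> / sqrt mf * W) * u" using s mf by (simp add: cb field_simps)
    also have "\<dots> \<le> y * u" using y u by (rule mult_right_mono)
    finally show ?thesis by (simp add: field_simps)
  qed
  moreover have "\<nu>\<^sup>2 / (4 * mf) \<le> r"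
    using noise_square_le_remainder[OF mf \<delta> W e] r by linarith
  ultimately show ?thesis by linarith
qed

section \<open>One step of the iteration\<close>

text \<open>\<open>P\<close>, \<open>Q\<close>, \<open>Pt\<close>, \<open>Qt\<close> play the roles of \<open>M\<^sub>+\<close>, \<open>M\<^sub>-\<close> and their transposes, \<open>G\<close> that of
  \<open>\<nabla>f\<close>; \<open>admm_step \<rho> Zk bk n X1 Z1 b1\<close> is the iteration (I)--(III) with the noise \<open>\<surd>2 D w\<close>
  replaced by an arbitrary \<open>n\<close>.\<close>
locale admm_operators =
  fixes P Q :: "'z::euclidean_space \<Rightarrow> 'x::euclidean_space" and Pt Qt :: "'x \<Rightarrow> 'z"
    and G :: "'x \<Rightarrow> 'x" and mf Mf :: real
  assumes adjoint_P: "\<And>z x. P z \<bullet> x = z \<bullet> Pt x"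
    and adjoint_Q: "\<And>z x. Q z \<bullet> x = z \<bullet> Qt x"
    and strongly_monotone: "\<And>x y. mf * (norm (x - y))\<^sup>2 \<le> (G x - G y) \<bullet> (x - y)"
    and Lipschitz: "\<And>x y. norm (G x - G y) \<le> Mf * norm (x - y)"
    and mf_pos: "0 < mf"
begin

lemmas linear_P = adjoint_pair_linear(1)[OF adjoint_P]
  and linear_Pt = adjoint_pair_linear(2)[OF adjoint_P]
  and linear_Q = adjoint_pair_linear(1)[OF adjoint_Q]
  and linear_Qt = adjoint_pair_linear(2)[OF adjoint_Q]

lemma mf_le_Mf: "mf \<le> Mf"
  by (rule strongly_monotone_le_Lipschitz[OF strongly_monotone Lipschitz])

definition admm_step :: "real \<Rightarrow> 'z \<Rightarrow> 'z \<Rightarrow> 'x \<Rightarrow> 'x \<Rightarrow> 'z \<Rightarrow> 'z \<Rightarrow> bool" where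
  "admm_step \<rho> Zk bk n X1 Z1 b1 \<longleftrightarrow>
     G X1 + Q b1 + n = \<rho> *\<^sub>R P (Zk - Z1) \<and> b1 = bk + (\<rho> / 2) *\<^sub>R Qt X1 \<and> Z1 = (1 / 2) *\<^sub>R Pt X1"

text \<open>The noise-free step is the solution of \<open>G X + (\<rho>/2) (Q Q\<^sup>T + P P\<^sup>T) X = \<rho> P Zk - Q bk\<close>,
  a strongly monotone Lipschitz equation.\<close>
lemma admm_step_exists:
  assumes rho: "0 < \<rho>"
  shows "\<exists>X1 Z1 b1. admm_step \<rho> Zk bk 0 X1 Z1 b1"
proof -
  define H where "H X = Q (Qt X) + P (Pt X)" for X
  have "H x \<bullet> y = Qt x \<bullet> Qt y + Pt x \<bullet> Pt y" for x y
    by (simp add: H_def inner_add_left adjoint_P adjoint_Q)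
  then have "H x \<bullet> y = x \<bullet> H y" for x y
    by (metis inner_commute)
  then have linH: "linear H" by (rule adjoint_pair_linear)
  obtain B where B: "\<And>x. norm (H x) \<le> B * norm x" using linear_bounded_pos[OF linH] by blast
  define F where "F X = G X + (\<rho> / 2) *\<^sub>R H X" for X
  have F_diff: "F x - F y = (G x - G y) + (\<rho> / 2) *\<^sub>R H (x - y)" for x y
    by (simp add: F_def linear_diff[OF linH] algebra_simps)
  have "mf * (norm (x - y))\<^sup>2 \<le> (F x - F y) \<bullet> (x - y)" for x y
  proof -
    have "0 \<le> \<rho> / 2 * (H (x - y) \<bullet> (x - y))"
      using rho by (simp add: H_def inner_add_left adjoint_P adjoint_Q)
    then show ?thesis
      using strongly_monotone[of x y] by (simp add: F_diff inner_add_left)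
  qed
  moreover have "norm (F x - F y) \<le> (Mf + \<rho> / 2 * B) * norm (x - y)" for x y
  proof -
    have "norm (F x - F y) \<le> norm (G x - G y) + \<rho> / 2 * norm (H (x - y))"
      unfolding F_diff using rho norm_triangle_ineq[of "G x - G y" "(\<rho> / 2) *\<^sub>R H (x - y)"]
      by simp
    also have "\<dots> \<le> Mf * norm (x - y) + \<rho> / 2 * (B * norm (x - y))"
      using Lipschitz[of x y] B[of "x - y"] rho by (intro add_mono mult_left_mono) simp_all
    finally show ?thesis by (simp add: algebra_simps)
  qed
  ultimately obtain X1 where X1: "F X1 = \<rho> *\<^sub>R P Zk - Q bk"
    using strongly_monotone_Lipschitz_surj mf_pos by blast
  have "admm_step \<rho> Zk bk 0 X1 ((1 / 2) *\<^sub>R Pt X1) (bk + (\<rho> / 2) *\<^sub>R Qt X1)"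
    using X1 unfolding admm_step_def F_def H_def
    by (simp add: linear_add[OF linear_Q] linear_scale[OF linear_Q] linear_diff[OF linear_P]
        linear_scale[OF linear_P] algebra_simps)
  then show ?thesis by blast
qed

lemma admm_step_energy_identity:
  assumes step: "admm_step \<rho> Zk bk 0 X1 Z1 b1" and rho: "0 < \<rho>"
    and Xs: "Qt Xs = 0" and opt: "G Xs + Q bs = 0" and Zs: "Zs = (1 / 2) *\<^sub>R Pt Xs"
  shows "\<rho> * (norm (Z1 - Zs))\<^sup>2 + (norm (b1 - bs))\<^sup>2 / \<rho>
    = \<rho> * (norm (Zk - Zs))\<^sup>2 + (norm (bk - bs))\<^sup>2 / \<rho>
      - \<rho> * (norm (Zk - Z1))\<^sup>2 - (norm (bk - b1))\<^sup>2 / \<rho> - (G X1 - G Xs) \<bullet> (X1 - Xs)"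
proof -
  define d where "d = X1 - Xs"
  define a1 where "a1 = Zk - Z1"
  define a2 where "a2 = Z1 - Zs"
  define e1 where "e1 = bk - b1"
  define e2 where "e2 = b1 - bs"
  have I: "G X1 + Q b1 = \<rho> *\<^sub>R P (Zk - Z1)" and II: "b1 = bk + (\<rho> / 2) *\<^sub>R Qt X1"
    and III: "Z1 = (1 / 2) *\<^sub>R Pt X1"
    using step unfolding admm_step_def add_0_right by blast+
  have "(G X1 - G Xs) + Q e2 = \<rho> *\<^sub>R P a1"
    using I opt by (simp add: e2_def a1_def linear_diff[OF linear_Q] algebra_simps)
  then have "(G X1 - G Xs) \<bullet> d + e2 \<bullet> Qt d = \<rho> * (a1 \<bullet> Pt d)"
    by (metis adjoint_P adjoint_Q inner_add_left inner_scaleR_left)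
  moreover have "Qt d = - (2 / \<rho>) *\<^sub>R e1"
    using rho II Xs by (simp add: d_def e1_def linear_diff[OF linear_Qt])
  moreover have "Pt d = 2 *\<^sub>R a2"
    using III Zs by (simp add: d_def a2_def linear_diff[OF linear_Pt] algebra_simps)
  ultimately have gd: "(G X1 - G Xs) \<bullet> d = 2 * \<rho> * (a1 \<bullet> a2) + 2 / \<rho> * (e1 \<bullet> e2)"
    by (simp add: inner_commute)
  have "Zk - Zs = a1 + a2" "bk - bs = e1 + e2" by (simp_all add: a1_def a2_def e1_def e2_def)
  then have "(norm (Zk - Zs))\<^sup>2 = (norm a1)\<^sup>2 + 2 * (a1 \<bullet> a2) + (norm a2)\<^sup>2"
    and "(norm (bk - bs))\<^sup>2 = (norm e1)\<^sup>2 + 2 * (e1 \<bullet> e2) + (norm e2)\<^sup>2"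
    by (simp_all add: power2_norm_eq_inner inner_add_left inner_add_right inner_commute)
  then show ?thesis
    using gd rho unfolding a1_def a2_def e1_def e2_def d_def by (simp add: field_simps)
qed

lemma admm_step_dual_error_bound:
  assumes step: "admm_step \<rho> Zk bk 0 X1 Z1 b1" and rho: "0 < \<rho>" and opt: "G Xs + Q bs = 0"
    and range: "bk - bs \<in> range Qt" and kappa: "1 < \<kappa>"
    and nP: "\<And>z. norm (P z) \<le> sP * norm z"
    and nQ: "\<And>v. v \<in> range Qt \<Longrightarrow> sm * norm v \<le> norm (Q v)" and sm: "0 < sm"
  shows "sm\<^sup>2 * (norm (b1 - bs))\<^sup>2
    \<le> \<kappa> / (\<kappa> - 1) * (\<rho>\<^sup>2 * sP\<^sup>2 * (norm (Zk - Z1))\<^sup>2) + \<kappa> * (Mf\<^sup>2 * (norm (X1 - Xs))\<^sup>2)"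
proof -
  have I: "G X1 + Q b1 = \<rho> *\<^sub>R P (Zk - Z1)" and II: "b1 = bk + (\<rho> / 2) *\<^sub>R Qt X1"
    using step unfolding admm_step_def add_0_right by blast+
  obtain y where "bk - bs = Qt y" using range by blast
  then have "b1 - bs = Qt (y + (\<rho> / 2) *\<^sub>R X1)"
    using II by (simp add: linear_add[OF linear_Qt] linear_scale[OF linear_Qt] algebra_simps)
  then have "sm * norm (b1 - bs) \<le> norm (Q (b1 - bs))" by (intro nQ) simp
  moreover have "Q (b1 - bs) = \<rho> *\<^sub>R P (Zk - Z1) - (G X1 - G Xs)"
    using I opt by (simp add: linear_diff[OF linear_Q] algebra_simps)
  ultimately have "(sm * norm (b1 - bs))\<^sup>2 \<le> (norm (\<rho> *\<^sub>R P (Zk - Z1) - (G X1 - G Xs)))\<^sup>2"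
    using sm by (intro power_mono) simp_all
  also have "\<dots> \<le> \<kappa> / (\<kappa> - 1) * (norm (\<rho> *\<^sub>R P (Zk - Z1)))\<^sup>2 + \<kappa> * (norm (G X1 - G Xs))\<^sup>2"
    by (rule power2_norm_diff_le_weighted[OF kappa])
  also have "\<dots> \<le> \<kappa> / (\<kappa> - 1) * (\<rho> * (sP * norm (Zk - Z1)))\<^sup>2 + \<kappa> * (Mf * norm (X1 - Xs))\<^sup>2"
    using kappa rho nP[of "Zk - Z1"] Lipschitz[of X1 Xs]
    by (intro add_mono mult_left_mono power_mono) simp_all
  finally show ?thesis by (simp add: power_mult_distrib)
qed

lemma admm_step_primal_error_bound:
  assumes step: "admm_step \<rho> Zk bk n X1 Z1 b1" and Zs: "Zs = (1 / 2) *\<^sub>R Pt Xs"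
    and nP: "\<And>z. norm (P z) \<le> sP * norm z"
  shows "(norm (Z1 - Zs))\<^sup>2 \<le> sP\<^sup>2 / 4 * (norm (X1 - Xs))\<^sup>2"
proof -
  obtain b :: 'z where "b \<in> Basis" using nonempty_Basis by blast
  then have "0 \<le> sP" using nP[of b] by (simp add: order_trans[OF norm_ge_zero])
  then have "norm (Pt (X1 - Xs)) \<le> sP * norm (X1 - Xs)"
    using adjoint_pair_norm_le[OF adjoint_P nP] by blast
  moreover have "Z1 - Zs = (1 / 2) *\<^sub>R Pt (X1 - Xs)"
    using step Zs by (simp add: admm_step_def linear_diff[OF linear_Pt] algebra_simps)
  ultimately show ?thesis
    using power_mono[of "norm (Pt (X1 - Xs))" "sP * norm (X1 - Xs)" 2]
    by (simp add: power_mult_distrib power_divide)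
qed

text \<open>The first constraint on \<open>\<delta>\<close> lets \<open>\<rho> \<parallel>Zk - Z1\<parallel>\<^sup>2\<close> absorb part of \<open>\<delta>\<close> times the new dual
  error; the second lets strong monotonicity absorb the rest together with \<open>\<delta>\<close> times the new
  primal error.\<close>
lemma admm_step_contraction:
  assumes step: "admm_step \<rho> Zk bk 0 X1 Z1 b1" and rho: "0 < \<rho>"
    and Xs: "Qt Xs = 0" and opt: "G Xs + Q bs = 0" and Zs: "Zs = (1 / 2) *\<^sub>R Pt Xs"
    and range: "bk - bs \<in> range Qt" and kappa: "1 < \<kappa>"
    and nP: "\<And>z. norm (P z) \<le> sP * norm z"
    and nQ: "\<And>v. v \<in> range Qt \<Longrightarrow> sm * norm v \<le> norm (Q v)" and sm: "0 < sm"
    and d0: "0 \<le> \<delta>" and d1: "\<delta> * \<kappa> * sP\<^sup>2 \<le> (\<kappa> - 1) * sm\<^sup>2"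
    and d2: "\<delta> * (\<rho> / 4 * sP\<^sup>2 + \<kappa> * Mf\<^sup>2 / (\<rho> * sm\<^sup>2)) \<le> mf"
  shows "(1 + \<delta>) * (\<rho> * (norm (Z1 - Zs))\<^sup>2 + (norm (b1 - bs))\<^sup>2 / \<rho>)
    \<le> \<rho> * (norm (Zk - Zs))\<^sup>2 + (norm (bk - bs))\<^sup>2 / \<rho>"
proof -
  define A where "A = (norm (Zk - Z1))\<^sup>2"
  define D where "D = (norm (X1 - Xs))\<^sup>2"
  define E where "E = (norm (b1 - bs))\<^sup>2"
  define Zn where "Zn = (norm (Z1 - Zs))\<^sup>2"
  define c where "c = \<delta> * \<kappa> * Mf\<^sup>2 / (\<rho> * sm\<^sup>2)"
  have "\<delta> * E / \<rho> \<le> \<rho> * A + c * D"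
  proof -
    have "\<delta> * E / \<rho> = \<delta> / (\<rho> * sm\<^sup>2) * (sm\<^sup>2 * E)" using rho sm by (simp add: field_simps)
    also have "\<dots> \<le> \<delta> / (\<rho> * sm\<^sup>2) * (\<kappa> / (\<kappa> - 1) * (\<rho>\<^sup>2 * sP\<^sup>2 * A) + \<kappa> * (Mf\<^sup>2 * D))"
      using admm_step_dual_error_bound[OF step rho opt range kappa nP nQ sm] d0 rho
      by (intro mult_left_mono) (simp_all add: A_def D_def E_def)
    also have "\<dots> = \<delta> * \<kappa> * sP\<^sup>2 / ((\<kappa> - 1) * sm\<^sup>2) * (\<rho> * A) + c * D"
      using rho sm kappa by (simp add: c_def field_simps power2_eq_square)
    also have "\<dots> \<le> 1 * (\<rho> * A) + c * D"
      using d1 kappa sm rho by (intro add_mono mult_right_mono) (simp_all add: A_def D_def pos_divide_le_eq)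
    finally show ?thesis by simp
  qed
  moreover have "\<delta> * \<rho> * Zn + c * D \<le> mf * D"
  proof -
    have "Zn \<le> sP\<^sup>2 / 4 * D"
      unfolding Zn_def D_def using step Zs nP by (rule admm_step_primal_error_bound)
    then have "\<delta> * \<rho> * Zn \<le> \<delta> * \<rho> * (sP\<^sup>2 / 4 * D)"
      using d0 rho by (intro mult_left_mono) simp_all
    then have "\<delta> * \<rho> * Zn + c * D \<le> \<delta> * (\<rho> / 4 * sP\<^sup>2 + \<kappa> * Mf\<^sup>2 / (\<rho> * sm\<^sup>2)) * D"
      by (simp add: c_def algebra_simps)
    also have "\<dots> \<le> mf * D" using d2 by (rule mult_right_mono) (simp add: D_def)
    finally show ?thesis .
  qed
  moreover have "mf * D \<le> (G X1 - G Xs) \<bullet> (X1 - Xs)"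
    unfolding D_def by (rule strongly_monotone)
  moreover have "(1 + \<delta>) * (\<rho> * Zn + E / \<rho>) = (\<rho> * Zn + E / \<rho>) + \<delta> * \<rho> * Zn + \<delta> * E / \<rho>"
    by (simp add: algebra_simps add_divide_distrib)
  moreover have "0 \<le> (norm (bk - b1))\<^sup>2 / \<rho>" using rho by simp
  ultimately show ?thesis
    using admm_step_energy_identity[OF step rho Xs opt Zs]
    unfolding A_def D_def E_def Zn_def by linarith
qed

text \<open>Subtracting the two steps and pairing with \<open>X1 - X2\<close> leaves
  \<open>\<rho>/2 (\<parallel>Q\<^sup>T e\<parallel>\<^sup>2 + \<parallel>P\<^sup>T e\<parallel>\<^sup>2) \<le> \<parallel>n\<parallel> \<parallel>e\<parallel> - mf \<parallel>e\<parallel>\<^sup>2 \<le> \<parallel>n\<parallel>\<^sup>2 / (4 mf)\<close>.\<close>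
lemma admm_step_noise_sensitivity:
  assumes step1: "admm_step \<rho> Zk bk n X1 Z1 b1" and step2: "admm_step \<rho> Zk bk 0 X2 Z2 b2"
    and rho: "0 < \<rho>"
  shows "\<rho> * (norm (Z1 - Z2))\<^sup>2 + (norm (b1 - b2))\<^sup>2 / \<rho> \<le> (norm n)\<^sup>2 / (8 * mf)"
proof -
  define e where "e = X1 - X2"
  have I1: "G X1 + Q b1 + n = \<rho> *\<^sub>R P (Zk - Z1)" and I2: "G X2 + Q b2 = \<rho> *\<^sub>R P (Zk - Z2)"
    using step1 step2 unfolding admm_step_def add_0_right by blast+
  have db: "b1 - b2 = (\<rho> / 2) *\<^sub>R Qt e"
    using step1 step2 by (simp add: admm_step_def e_def linear_diff[OF linear_Qt] scaleR_diff_right)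
  have dz: "Z1 - Z2 = (1 / 2) *\<^sub>R Pt e"
    using step1 step2 by (simp add: admm_step_def e_def linear_diff[OF linear_Pt] scaleR_diff_right)
  have "(G X1 - G X2) + Q (b1 - b2) + n = - (\<rho> *\<^sub>R P (Z1 - Z2))"
    using I1 I2 by (simp add: linear_diff[OF linear_Q] linear_diff[OF linear_P] algebra_simps)
  then have "(G X1 - G X2) \<bullet> e + (b1 - b2) \<bullet> Qt e + n \<bullet> e = - \<rho> * ((Z1 - Z2) \<bullet> Pt e)"
    by (metis adjoint_P adjoint_Q inner_add_left inner_minus_left inner_scaleR_left mult_minus_left)
  then have "\<rho> / 2 * ((norm (Qt e))\<^sup>2 + (norm (Pt e))\<^sup>2) = - (n \<bullet> e) - (G X1 - G X2) \<bullet> e"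
    by (simp add: db dz power2_norm_eq_inner algebra_simps)
  also have "\<dots> \<le> norm n * norm e - mf * (norm e)\<^sup>2"
    using norm_cauchy_schwarz[of "- n" e] strongly_monotone[of X1 X2] by (simp add: e_def)
  also have "\<dots> \<le> (norm n)\<^sup>2 / (4 * mf)"
  proof -
    have "0 \<le> (norm n - 2 * mf * norm e)\<^sup>2" by simp
    then show ?thesis using mf_pos by (simp add: field_simps power2_eq_square)
  qed
  finally have "\<rho> / 2 * ((norm (Qt e))\<^sup>2 + (norm (Pt e))\<^sup>2) \<le> (norm n)\<^sup>2 / (4 * mf)" .
  then show ?thesis
    using rho mf_pos by (simp add: db dz power_mult_distrib field_simps power2_eq_square)
qed

text \<open>Compare the noisy step with the noise-free step from the same state: the latter contracts
  by \<open>1 + \<delta>\<close>, the former differs from it by the noise term.\<close>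
lemma admm_step_Gnorm_bound:
  assumes step: "admm_step \<rho> Zk bk n X1 Z1 b1" and rho: "0 < \<rho>"
    and Xs: "Qt Xs = 0" and opt: "G Xs + Q bs = 0" and Zs: "Zs = (1 / 2) *\<^sub>R Pt Xs"
    and range: "bk - bs \<in> range Qt" and kappa: "1 < \<kappa>"
    and nP: "\<And>z. norm (P z) \<le> sP * norm z"
    and nQ: "\<And>v. v \<in> range Qt \<Longrightarrow> sm * norm v \<le> norm (Q v)" and sm: "0 < sm"
    and d0: "0 \<le> \<delta>" and d1: "\<delta> * \<kappa> * sP\<^sup>2 \<le> (\<kappa> - 1) * sm\<^sup>2"
    and d2: "\<delta> * (\<rho> / 4 * sP\<^sup>2 + \<kappa> * Mf\<^sup>2 / (\<rho> * sm\<^sup>2)) \<le> mf"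
  shows "Gnorm \<rho> (Z1 - Zs) (b1 - bs)
    \<le> Gnorm \<rho> (Zk - Zs) (bk - bs) / sqrt (1 + \<delta>) + norm n / (2 * sqrt 2 * sqrt mf)"
proof -
  obtain X2 Z2 b2 where step2: "admm_step \<rho> Zk bk 0 X2 Z2 b2"
    using admm_step_exists[OF rho] by blast
  have "(1 + \<delta>) * (Gnorm \<rho> (Z2 - Zs) (b2 - bs))\<^sup>2 \<le> (Gnorm \<rho> (Zk - Zs) (bk - bs))\<^sup>2"
    using admm_step_contraction[OF step2 rho Xs opt Zs range kappa nP nQ sm d0 d1 d2]
    by (simp add: power2_Gnorm[OF rho])
  then have "(Gnorm \<rho> (Z2 - Zs) (b2 - bs))\<^sup>2 \<le> (Gnorm \<rho> (Zk - Zs) (bk - bs) / sqrt (1 + \<delta>))\<^sup>2"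
    using d0 by (simp add: power_divide pos_le_divide_eq mult.commute)
  then have contr: "Gnorm \<rho> (Z2 - Zs) (b2 - bs) \<le> Gnorm \<rho> (Zk - Zs) (bk - bs) / sqrt (1 + \<delta>)"
    by (rule power2_le_imp_le) (use rho d0 in \<open>simp add: Gnorm_nonneg divide_nonneg_nonneg\<close>)
  have "(Gnorm \<rho> (Z1 - Z2) (b1 - b2))\<^sup>2 \<le> (norm n / (2 * sqrt 2 * sqrt mf))\<^sup>2"
    using admm_step_noise_sensitivity[OF step step2 rho] mf_pos
    by (simp add: power2_Gnorm[OF rho] power_divide power_mult_distrib)
  then have noise: "Gnorm \<rho> (Z1 - Z2) (b1 - b2) \<le> norm n / (2 * sqrt 2 * sqrt mf)"
    by (rule power2_le_imp_le) (use mf_pos in simp)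
  have "Gnorm \<rho> (Z1 - Zs) (b1 - bs) = Gnorm \<rho> ((Z2 - Zs) + (Z1 - Z2)) ((b2 - bs) + (b1 - b2))"
    by simp
  also have "\<dots> \<le> Gnorm \<rho> (Z2 - Zs) (b2 - bs) + Gnorm \<rho> (Z1 - Z2) (b1 - b2)"
    by (rule Gnorm_triangle[OF rho])
  finally show ?thesis using contr noise by linarith
qed

lemma admm_noisy_step_bound:
  assumes step: "admm_step \<rho> Zk bk (sqrt 2 *\<^sub>R Dw) X1 Z1 b1" and rho: "0 < \<rho>"
    and Xs: "Qt Xs = 0" and opt: "G Xs + Q bs = 0" and Zs: "Zs = (1 / 2) *\<^sub>R Pt Xs"
    and range: "bk - bs \<in> range Qt" and kappa: "1 < \<kappa>"
    and nP: "\<And>z. norm (P z) \<le> sP * norm z" and sQ: "0 \<le> sQ"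
    and nQ: "\<And>v. v \<in> range Qt \<Longrightarrow> sm * norm v \<le> norm (Q v)" and sm: "0 < sm"
    and sm_le: "sm \<le> sP"
  defines "\<delta> \<equiv> cdelta \<kappa> \<rho> mf Mf sP sm"
  shows "(Gnorm \<rho> (Z1 - Zs) (b1 - bs))\<^sup>2
    \<le> ca \<delta> mf * (Gnorm \<rho> (Zk - Zs) (bk - bs))\<^sup>2
      + ynoise \<kappa> \<rho> mf Mf sP sQ sm Dw * Gnorm \<rho> (Zk - Zs) (bk - bs)
      + rnoise \<kappa> \<rho> mf Mf sP sQ sm Dw"
proof -
  note \<delta> = cdelta_bounds[OF mf_pos rho kappa sm sm_le mf_le_Mf, folded \<delta>_def]
  have cc: "0 \<le> cc \<delta> sm" and cdt: "0 \<le> cdt \<rho> sQ"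
    using \<delta>(1) sm rho by (simp_all add: cc_def cdt_def)
  have bound: "Gnorm \<rho> (Z1 - Zs) (b1 - bs)
      \<le> Gnorm \<rho> (Zk - Zs) (bk - bs) / sqrt (1 + \<delta>) + norm Dw / (2 * sqrt mf)"
    using admm_step_Gnorm_bound[OF step rho Xs opt Zs range kappa nP nQ sm \<delta>(1,3,4)] by simp
  have W: "wbar mf Dw = norm Dw / (sqrt 2 * mf) + sqrt 2 * norm Dw"
    using mf_pos by (simp add: wbar_def)
  have y: "2 * cb \<delta> / sqrt mf * wbar mf Dw \<le> ynoise \<kappa> \<rho> mf Mf sP sQ sm Dw"
    using cc cdt sQ rho mf_pos by (simp add: ynoise_def Let_def \<delta>_def)
  have r: "sqrt 2 * cb \<delta> / mf * wbar mf Dw * norm Dw + cb \<delta> * (wbar mf Dw)\<^sup>2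
      + cb \<delta> / (2 * mf\<^sup>2) * (norm Dw)\<^sup>2 - ce \<delta> \<rho> sm * (norm Dw)\<^sup>2 \<le> rnoise \<kappa> \<rho> mf Mf sP sQ sm Dw"
    using cc cdt mf_pos by (simp add: rnoise_def Let_def \<delta>_def)
  show ?thesis
    by (rule power2_le_noise_quadratic[OF mf_pos \<delta>(1,2) Gnorm_nonneg[OF rho] norm_ge_zero
          Gnorm_nonneg[OF rho] bound W y r \<delta>(5)])
qed

lemma admm_iterates_dual_in_range:
  assumes steps: "\<And>k. admm_step \<rho> (Z k) (b k) (n k) (X (Suc k)) (Z (Suc k)) (b (Suc k))"
    and b0: "b 0 \<in> range Qt" and bs: "bs \<in> range Qt"
  shows "b k - bs \<in> range Qt"
proof -
  have S: "subspace (range Qt)" by (rule linear_subspace_image[OF linear_Qt subspace_UNIV])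
  have "b k \<in> range Qt"
  proof (induction k)
    case 0
    show ?case by (rule b0)
  next
    case (Suc k)
    have "b (Suc k) = b k + Qt ((\<rho> / 2) *\<^sub>R X (Suc k))"
      using steps[of k] by (simp add: admm_step_def linear_scale[OF linear_Qt])
    then show ?case using Suc S by (simp add: subspace_add)
  qed
  then show ?thesis using bs S by (simp add: subspace_diff)
qed

end

section \<open>The edge-node incidence operators\<close>

lemma arc_endpoints_distinct:
  assumes "\<forall>e\<in>E. card e = 2" and "(i, j) \<in> arcs E"
  shows "i \<noteq> j"
  using assms by (auto simp: arcs_def)

lemma power2_norm_vec: "(norm (x :: 'b::real_normed_vector ^ 'n))\<^sup>2 = (\<Sum>i\<in>UNIV. (norm (x $ i))\<^sup>2)"
  by (simp add: norm_vec_def L2_set_def sum_nonneg)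

lemma sum_if_two_points:
  fixes g h :: "'n::finite \<Rightarrow> 'b::comm_monoid_add"
  assumes "i1 \<noteq> i2"
  shows "(\<Sum>i\<in>UNIV. if i1 = i then g i else if i2 = i then h i else 0) = g i1 + h i2"
proof -
  have "(if i1 = i then g i else if i2 = i then h i else 0)
      = (if i1 = i then g i else 0) + (if i2 = i then h i else 0)" for i
    using assms by auto
  then show ?thesis by (simp add: sum.distrib)
qed

lemma inner_Mplus:
  fixes ar :: "'a::finite \<Rightarrow> 'n::finite \<times> 'n"
  assumes loops: "\<And>q. fst (ar q) \<noteq> snd (ar q)"
  shows "Mplus ar Z \<bullet> X = Z \<bullet> MplusT ar (X :: real^'d^'n)"
proof -
  have "Mplus ar Z \<bullet> X = (\<Sum>i\<in>UNIV. \<Sum>q\<in>UNIV.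
      (if fst (ar q) = i \<or> snd (ar q) = i then Z $ q else 0) \<bullet> X $ i)"
    by (simp only: inner_vec_def[where 'a="real^'d" and 'b='n] Mplus_def vec_lambda_beta inner_sum_left)
  also have "\<dots> = (\<Sum>q\<in>UNIV. \<Sum>i\<in>UNIV. (if fst (ar q) = i then Z $ q \<bullet> X $ i
      else if snd (ar q) = i then Z $ q \<bullet> X $ i else 0))"
    by (subst sum.swap) (auto intro!: sum.cong)
  also have "\<dots> = (\<Sum>q\<in>UNIV. Z $ q \<bullet> X $ fst (ar q) + Z $ q \<bullet> X $ snd (ar q))"
    by (intro sum.cong refl, subst sum_if_two_points[OF loops]) simp
  also have "\<dots> = Z \<bullet> MplusT ar X"
    by (simp only: inner_vec_def[where 'a="real^'d" and 'b='a] MplusT_def vec_lambda_beta inner_add_right)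
  finally show ?thesis .
qed

lemma inner_Mminus:
  fixes ar :: "'a::finite \<Rightarrow> 'n::finite \<times> 'n"
  assumes loops: "\<And>q. fst (ar q) \<noteq> snd (ar q)"
  shows "Mminus ar Z \<bullet> X = Z \<bullet> MminusT ar (X :: real^'d^'n)"
proof -
  have "Mminus ar Z \<bullet> X = (\<Sum>i\<in>UNIV. \<Sum>q\<in>UNIV. (if fst (ar q) = i then Z $ q
      else if snd (ar q) = i then - (Z $ q) else 0) \<bullet> X $ i)"
    by (simp only: inner_vec_def[where 'a="real^'d" and 'b='n] Mminus_def vec_lambda_beta inner_sum_left)
  also have "\<dots> = (\<Sum>q\<in>UNIV. \<Sum>i\<in>UNIV. (if fst (ar q) = i then Z $ q \<bullet> X $ i
      else if snd (ar q) = i then - (Z $ q \<bullet> X $ i) else 0))"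
    by (subst sum.swap) (auto intro!: sum.cong)
  also have "\<dots> = (\<Sum>q\<in>UNIV. Z $ q \<bullet> X $ fst (ar q) - Z $ q \<bullet> X $ snd (ar q))"
    by (intro sum.cong refl, subst sum_if_two_points[OF loops]) simp
  also have "\<dots> = Z \<bullet> MminusT ar X"
    by (simp only: inner_vec_def[where 'a="real^'d" and 'b='a] MminusT_def vec_lambda_beta inner_diff_right)
  finally show ?thesis .
qed

lemma MplusT_ne_zero:
  fixes ar :: "'a::finite \<Rightarrow> 'n::finite \<times> 'n"
  assumes "fst (ar q) \<noteq> snd (ar q)"
  shows "MplusT ar ((\<chi> i. if i = fst (ar q) then 1 else 0) :: real^'d^'n) \<noteq> 0"
proof
  assume "MplusT ar ((\<chi> i. if i = fst (ar q) then 1 else 0) :: real^'d^'n) = 0"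
  moreover have "MplusT ar ((\<chi> i. if i = fst (ar q) then 1 else 0) :: real^'d^'n) $ q = 1"
    using assms by (simp add: MplusT_def)
  ultimately have "(1 :: real^'d) = 0" by simp
  then show False by (simp add: vec_eq_iff)
qed

lemma MminusT_ne_zero:
  fixes ar :: "'a::finite \<Rightarrow> 'n::finite \<times> 'n"
  assumes "fst (ar q) \<noteq> snd (ar q)"
  shows "MminusT ar ((\<chi> i. if i = fst (ar q) then 1 else 0) :: real^'d^'n) \<noteq> 0"
proof
  assume "MminusT ar ((\<chi> i. if i = fst (ar q) then 1 else 0) :: real^'d^'n) = 0"
  moreover have "MminusT ar ((\<chi> i. if i = fst (ar q) then 1 else 0) :: real^'d^'n) $ q = 1"
    using assms by (simp add: MminusT_def)
  ultimately have "(1 :: real^'d) = 0" by simp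
  then show False by (simp add: vec_eq_iff)
qed

text \<open>Replace every block of \<open>v\<close> by its norm times a fixed unit vector: the signs in \<open>M\<^sub>-\<close>
  can then only cancel, those in \<open>M\<^sub>+\<close> cannot.\<close>
lemma Mminus_norm_le_Mplus:
  fixes ar :: "'a::finite \<Rightarrow> 'n::finite \<times> 'n" and v :: "real^'d^'a"
  obtains w :: "real^'d^'a" where "norm w = norm v" and "norm (Mminus ar v) \<le> norm (Mplus ar w)"
proof -
  define u where "u = (axis undefined 1 :: real^'d)"
  define w where "w = (\<chi> q. norm (v $ q) *\<^sub>R u)"
  have "norm u = 1" by (simp add: u_def)
  then have "norm w = norm v" by (simp add: w_def norm_vec_def[where 'a="real^'d" and 'b='a])
  moreover
  define S where "S i = (\<Sum>q\<in>UNIV. if fst (ar q) = i \<or> snd (ar q) = i then norm (v $ q) else 0)" for i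
  have "norm (Mminus ar v $ i) \<le> S i" for i
  proof -
    have "norm (Mminus ar v $ i) \<le> (\<Sum>q\<in>UNIV. norm (if fst (ar q) = i then v $ q
        else if snd (ar q) = i then - (v $ q) else 0))"
      unfolding Mminus_def vec_lambda_beta by (rule norm_sum)
    also have "\<dots> \<le> S i" unfolding S_def by (rule sum_mono) auto
    finally show ?thesis .
  qed
  moreover have "Mplus ar w $ i = S i *\<^sub>R u" for i
    by (auto simp: Mplus_def w_def S_def scaleR_sum_left intro!: sum.cong)
  ultimately have "norm (Mminus ar v) \<le> norm (Mplus ar w)"
    unfolding norm_vec_def[where 'a="real^'d" and 'b='n]
    by (intro L2_set_mono) (simp_all add: \<open>norm u = 1\<close> S_def sum_nonneg)
  with \<open>norm w = norm v\<close> show ?thesis by (rule that)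
qed

lemma Mplus_Mminus_singular_value_bounds:
  fixes ar :: "'a::finite \<Rightarrow> 'n::finite \<times> 'n"
  assumes loops: "\<And>q. fst (ar q) \<noteq> snd (ar q)"
  defines "P \<equiv> Mplus ar :: real^'d^'a \<Rightarrow> real^'d^'n" and "Q \<equiv> Mminus ar :: real^'d^'a \<Rightarrow> real^'d^'n"
  shows "\<And>z. norm (P z) \<le> sigma_max P * norm z" and "0 < sigma_max Q"
    and "\<And>v. v \<in> range (MminusT ar) \<Longrightarrow> sigma_min Q * norm v \<le> norm (Q v)"
    and "0 < sigma_min Q" and "sigma_min Q \<le> sigma_max P"
proof -
  fix q :: 'a
  let ?x = "(\<chi> i. if i = fst (ar q) then 1 else 0) :: real^'d^'n"
  have adjP: "\<And>z x. P z \<bullet> x = z \<bullet> MplusT ar x" and adjQ: "\<And>z x. Q z \<bullet> x = z \<bullet> MminusT ar x"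
    unfolding P_def Q_def using inner_Mplus[of ar, OF loops] inner_Mminus[of ar, OF loops] by blast+
  have linP: "linear P" and linQ: "linear Q"
    using adjoint_pair_linear(1) adjP adjQ by blast+
  have nzP: "P (MplusT ar ?x) \<noteq> 0" and nzQ: "Q (MminusT ar ?x) \<noteq> 0"
    using adjoint_pair_ne_zero[OF adjP MplusT_ne_zero[of ar q, OF loops]]
      adjoint_pair_ne_zero[OF adjQ MminusT_ne_zero[of ar q, OF loops]] by blast+
  have "adjoint Q = MminusT ar" by (rule adjoint_unique) (simp add: adjQ)
  then show nP: "\<And>z. norm (P z) \<le> sigma_max P * norm z" and "0 < sigma_max Q"
    and nQ: "\<And>v. v \<in> range (MminusT ar) \<Longrightarrow> sigma_min Q * norm v \<le> norm (Q v)"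
    and "0 < sigma_min Q"
    using sigma_max_bound[OF linP nzP] sigma_max_bound[OF linQ nzQ] sigma_min_bound[OF linQ nzQ]
    by simp_all
  define v where "v = MminusT ar ?x"
  obtain w where "norm w = norm v" and "norm (Q v) \<le> norm (P w)"
    unfolding P_def Q_def by (rule Mminus_norm_le_Mplus)
  then have "sigma_min Q * norm v \<le> sigma_max P * norm v"
    using nP[of w] nQ[of v] by (simp add: v_def)
  moreover have "0 < norm v" using MminusT_ne_zero[of ar q, OF loops] by (simp add: v_def)
  ultimately show "sigma_min Q \<le> sigma_max P" by simp
qed

lemma stacked_strongly_monotone:
  fixes g :: "'n::finite \<Rightarrow> 'b::real_inner \<Rightarrow> 'b"
  assumes mono: "\<And>i u v. m i * (norm (u - v))\<^sup>2 \<le> (g i u - g i v) \<bullet> (u - v)" and c: "\<And>i. c \<le> m i"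
  shows "c * (norm (X - Y))\<^sup>2 \<le> ((\<chi> i. g i (X $ i)) - (\<chi> i. g i (Y $ i))) \<bullet> (X - Y)"
proof -
  have "c * (norm (X - Y))\<^sup>2 = (\<Sum>i\<in>UNIV. c * (norm (X $ i - Y $ i))\<^sup>2)"
    by (simp add: power2_norm_vec sum_distrib_left)
  also have "\<dots> \<le> (\<Sum>i\<in>UNIV. (g i (X $ i) - g i (Y $ i)) \<bullet> (X $ i - Y $ i))"
    by (rule sum_mono, rule order_trans[OF mult_right_mono[OF c] mono]) simp
  also have "\<dots> = ((\<chi> i. g i (X $ i)) - (\<chi> i. g i (Y $ i))) \<bullet> (X - Y)"
    by (simp add: inner_vec_def)
  finally show ?thesis .
qed

lemma stacked_Lipschitz:
  fixes g :: "'n::finite \<Rightarrow> 'b::real_normed_vector \<Rightarrow> 'b"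
  assumes lip: "\<And>i u v. norm (g i u - g i v) \<le> L i * norm (u - v)" and C: "\<And>i. L i \<le> C"
    and "0 \<le> C"
  shows "norm ((\<chi> i. g i (X $ i)) - (\<chi> i. g i (Y $ i))) \<le> C * norm (X - Y)"
proof -
  have "(norm ((\<chi> i. g i (X $ i)) - (\<chi> i. g i (Y $ i))))\<^sup>2
      = (\<Sum>i\<in>UNIV. (norm (g i (X $ i) - g i (Y $ i)))\<^sup>2)"
    by (simp add: power2_norm_vec)
  also have "\<dots> \<le> (\<Sum>i\<in>UNIV. (C * norm (X $ i - Y $ i))\<^sup>2)"
    by (rule sum_mono, rule power_mono, rule order_trans[OF lip mult_right_mono[OF C]]) simp_all
  also have "\<dots> = (C * norm (X - Y))\<^sup>2"
    by (simp add: power2_norm_vec power_mult_distrib sum_distrib_left)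
  finally show ?thesis by (rule power2_le_imp_le) (use \<open>0 \<le> C\<close> in simp)
qed

theorem mainTheorem4:
  fixes E :: "('n::finite) set set"
    and ar :: "'a::finite \<Rightarrow> 'n \<times> 'n"
    and f :: "'n \<Rightarrow> real^'d::finite \<Rightarrow> real"
    and df :: "'n \<Rightarrow> real^'d \<Rightarrow> real^'d"
    and m Mlip :: "'n \<Rightarrow> real"
    and xstar :: "real^'d"
    and betastar :: "real^'d^'a"
    and \<kappa> \<rho> :: real
    and M :: "'o measure"
    and w X :: "nat \<Rightarrow> 'o \<Rightarrow> real^'d^'n"
    and Z \<beta> :: "nat \<Rightarrow> 'o \<Rightarrow> real^'d^'a"
  assumes edges: "\<forall>e\<in>E. card e = 2"
    and conn: "connected_graph E"
    and enum: "bij_betw ar UNIV (arcs E)"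
    and grad: "\<And>i x. (f i has_derivative (\<lambda>h. df i x \<bullet> h)) (at x)"
    and m_pos: "\<And>i. m i > 0"
    and strong: "\<And>i u v. (df i u - df i v) \<bullet> (u - v) \<ge> m i * (norm (u - v))\<^sup>2"
    and lip: "\<And>i u v. norm (df i u - df i v) \<le> Mlip i * norm (u - v)"
    and xstar_min: "\<And>x. (\<Sum>i\<in>UNIV. f i xstar) \<le> (\<Sum>i\<in>UNIV. f i x)"
    and betastar_range: "betastar \<in> range (MminusT ar)"
    and betastar_eq: "(\<chi> i. df i xstar) + Mminus ar betastar = 0"
    and kappa: "\<kappa> > 1"
    and rho: "\<rho> > 0"
    and P: "prob_space M"
    and gauss: "\<And>k. k \<ge> 1 \<Longrightarrow> distributed M lborel (w k) std_gauss_density"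
    and indep: "prob_space.indep_vars M (\<lambda>_. borel)
                  (\<lambda>k \<omega>. if k = 0 then (X 0 \<omega>, \<beta> 0 \<omega>) else (w k \<omega>, 0)) UNIV"
    and init_range: "\<And>\<omega>. \<omega> \<in> space M \<Longrightarrow> \<beta> 0 \<omega> \<in> range (MminusT ar)"
    and init_Z: "\<And>\<omega>. \<omega> \<in> space M \<Longrightarrow> Z 0 \<omega> = (1/2) *\<^sub>R MplusT ar (X 0 \<omega>)"
    and iterI: "\<And>k \<omega>. \<omega> \<in> space M \<Longrightarrow>
        (\<chi> i. df i (X (Suc k) \<omega> $ i)) + Mminus ar (\<beta> (Suc k) \<omega>)
          + sqrt 2 *\<^sub>R Dmat E (w (Suc k) \<omega>)
        = \<rho> *\<^sub>R Mplus ar (Z k \<omega> - Z (Suc k) \<omega>)"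
    and iterII: "\<And>k \<omega>. \<omega> \<in> space M \<Longrightarrow>
        \<beta> (Suc k) \<omega> - \<beta> k \<omega> - (\<rho> / 2) *\<^sub>R MminusT ar (X (Suc k) \<omega>) = 0"
    and iterIII: "\<And>k \<omega>. \<omega> \<in> space M \<Longrightarrow>
        (1/2) *\<^sub>R MplusT ar (X (Suc k) \<omega>) - Z (Suc k) \<omega> = 0"
  shows "AE \<omega> in M. \<forall>k.
     (let mf = Min (range m); Mf = Max (range Mlip);
          smaxP = sigma_max (Mplus ar :: real^'d^'a \<Rightarrow> real^'d^'n);
          smaxM = sigma_max (Mminus ar :: real^'d^'a \<Rightarrow> real^'d^'n);
          sminM = sigma_min (Mminus ar :: real^'d^'a \<Rightarrow> real^'d^'n);
          \<delta> = cdelta \<kappa> \<rho> mf Mf smaxP sminM;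
          Zs = (1/2) *\<^sub>R MplusT ar ((\<chi> i. xstar) :: real^'d^'n);
          Dw = Dmat E (w (Suc k) \<omega>)
      in (Gnorm \<rho> (Z (Suc k) \<omega> - Zs) (\<beta> (Suc k) \<omega> - betastar))\<^sup>2
         \<le> ca \<delta> mf * (Gnorm \<rho> (Z k \<omega> - Zs) (\<beta> k \<omega> - betastar))\<^sup>2
           + ynoise \<kappa> \<rho> mf Mf smaxP smaxM sminM Dw * Gnorm \<rho> (Z k \<omega> - Zs) (\<beta> k \<omega> - betastar)
           + rnoise \<kappa> \<rho> mf Mf smaxP smaxM sminM Dw)"
proof -
  have loops: "\<And>q. fst (ar q) \<noteq> snd (ar q)"
    using arc_endpoints_distinct[OF edges] bij_betw_apply[OF enum] by (metis UNIV_I prod.collapse)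
  define G where "G X = (\<chi> i. df i (X $ i))" for X :: "real^'d^'n"
  have "m i \<le> Mlip i" and "Mlip i \<le> Max (range Mlip)" for i
    by (rule strongly_monotone_le_Lipschitz[OF strong lip]) simp
  then have "0 \<le> Max (range Mlip)" using m_pos[of undefined] by (meson less_le_trans less_imp_le)
  then interpret admm_operators "Mplus ar" "Mminus ar" "MplusT ar" "MminusT ar" G "Min (range m)" "Max (range Mlip)"
    using inner_Mplus[of ar, OF loops] inner_Mminus[of ar, OF loops] m_pos
      stacked_strongly_monotone[OF strong, where c="Min (range m)"]
      stacked_Lipschitz[OF lip, where C="Max (range Mlip)"]
    by unfold_locales (simp_all add: G_def)
  note svals = Mplus_Mminus_singular_value_bounds[of ar, OF loops, where 'd='d]
  have step: "admm_step \<rho> (Z k \<omega>) (\<beta> k \<omega>) (sqrt 2 *\<^sub>R Dmat E (w (Suc k) \<omega>))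
      (X (Suc k) \<omega>) (Z (Suc k) \<omega>) (\<beta> (Suc k) \<omega>)" if "\<omega> \<in> space M" for k \<omega>
    using iterI[OF that] iterII[OF that] iterIII[OF that] by (simp add: admm_step_def G_def algebra_simps)
  have opt: "G (\<chi> i. xstar) + Mminus ar betastar = 0" using betastar_eq by (simp add: G_def)
  have Xs: "MminusT ar (\<chi> i. xstar) = 0" by (simp add: MminusT_def vec_eq_iff)
  have range: "\<beta> k \<omega> - betastar \<in> range (MminusT ar)" if "\<omega> \<in> space M" for k \<omega>
    using admm_iterates_dual_in_range[OF step[OF that] init_range[OF that] betastar_range] .
  show ?thesis
    using admm_noisy_step_bound[OF step rho Xs opt refl range kappa svals(1) less_imp_le[OF svals(2)]
        svals(3-5)]
    by (auto intro!: AE_I2 simp: Let_def)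
qed

end
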